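(* Let $\Gamma$ be a discrete group, $\widetilde{\Gamma}=\Gamma\times\Gamma^{\rm op}$, acting on $\Gamma$ by $(g_1,g_2)\cdot y=g_1yg_2$. Let $\widetilde{\Gamma}_1\subseteq\widetilde{\Gamma}$ be the intersection of the stabilizers of an infinite family of distinct elements $(x_n)_n$ of $\Gamma$, assume $\widetilde{\Gamma}_1$ is non-trivial, and fix $x$ in the family $(x_n)_n$. Then: (1) there is a subgroup $\Gamma_1$ of $\Gamma$, depending only on $\widetilde{\Gamma}_1$ and not on the choice of $x$, such that $\widetilde{\Gamma}_1=\{(\gamma_1,x^{-1}\gamma_1^{-1}x)\mid\gamma_1\in\Gamma_1\}$; (2) letting $\mathcal M(\widetilde{\Gamma}_1)=\Gamma_1'$ be the centralizer of $\Gamma_1$ in $\Gamma$ and $\widetilde{\mathcal M}(\widetilde{\Gamma}_1)=\{(\gamma_1,\gamma_2)\mid\gamma_1\in\Gamma_1',\ \gamma_2\in x^{-1}\Gamma_1'x\}$, the orbit $\widetilde{\mathcal M}(\widetilde{\Gamma}_1)x=x(x^{-1}\mathcal M(\widetilde{\Gamma}_1)x)=\Gamma_1'x$ is the set of all elements of $\Gamma$ fixed by $\widetilde{\Gamma}_1$; explicitly, for $\gamma_1,\gamma_2\in\Gamma_1'$ and $m\in\Gamma_1'$, $(\gamma_1,x^{-1}\gamma_2x)\cdot(mx)=\gamma_1m\gamma_2x$; (3) if $\widetilde{\mathcal M}(\widetilde{\Gamma}_1^{\alpha})$, $\widetilde{\mathcal M}(\widetilde{\Gamma}_1^{\beta})$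 are two subgroups constructed as in (2) from non-trivial groups $\widetilde{\Gamma}_1^\alpha,\widetilde{\Gamma}_1^\beta$ of this type with corresponding points $x_\alpha,x_\beta$ fixed by $\widetilde{\Gamma}_1^\alpha$, $\widetilde{\Gamma}_1^\beta$ respectively, and if $\widetilde{\mathcal M}(\widetilde{\Gamma}_1^{\alpha})x_\alpha\cap\widetilde{\mathcal M}(\widetilde{\Gamma}_1^{\beta})x_\beta$ is non-empty, containing an element $m_\alpha\cdot x_\alpha=m_\beta\cdot x_\beta$ with $m_\alpha\in\widetilde{\mathcal M}(\widetilde{\Gamma}_1^{\alpha})$, $m_\beta\in\widetilde{\mathcal M}(\widetilde{\Gamma}_1^{\beta})$, then $$\widetilde{\mathcal M}(\widetilde{\Gamma}_1^{\alpha})x_\alpha\cap\widetilde{\mathcal M}(\widetilde{\Gamma}_1^{\beta})x_\beta=\big(\widetilde{\mathcal M}(\widetilde{\Gamma}_1^{\alpha})\cap\widetilde{\mathcal M}(\widetilde{\Gamma}_1^{\beta})\big)\cdot(m_\varepsilon\cdot x_\varepsilon),\quad\varepsilon=\alpha,\beta.$$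
   Context: $\Gamma^{\rm op}$ is $\Gamma$ with the opposite multiplication, so that $(g_1,g_2)\cdot y=g_1yg_2$ defines a left action of $\Gamma\times\Gamma^{\rm op}$ on $\Gamma$. For a subset $K\subseteq\widetilde{\Gamma}$ and $y\in\Gamma$, $Ky$ denotes $\{k\cdot y\mid k\in K\}$. *)

theory Defs
  imports "HOL-Algebra.Algebra"
begin

text \<open>The group tilde-Gamma = Gamma x Gamma^op is represented by pairs of elements
  of the carrier; it acts on Gamma by (g1,g2).y = g1 y g2.\<close>

definition tact :: "('a, 'b) monoid_scheme \<Rightarrow> 'a \<times> 'a \<Rightarrow> 'a \<Rightarrow> 'a" where
  "tact G g y = fst g \<otimes>\<^bsub>G\<^esub> y \<otimes>\<^bsub>G\<^esub> snd g"

definition tcarrier :: "('a, 'b) monoid_scheme \<Rightarrow> ('a \<times> 'a) set" where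
  "tcarrier G = carrier G \<times> carrier G"

definition tone :: "('a, 'b) monoid_scheme \<Rightarrow> 'a \<times> 'a" where
  "tone G = (\<one>\<^bsub>G\<^esub>, \<one>\<^bsub>G\<^esub>)"

definition tset_act :: "('a, 'b) monoid_scheme \<Rightarrow> ('a \<times> 'a) set \<Rightarrow> 'a \<Rightarrow> 'a set" where
  "tset_act G K y = (\<lambda>k. tact G k y) ` K"

definition tstab :: "('a, 'b) monoid_scheme \<Rightarrow> 'a \<Rightarrow> ('a \<times> 'a) set" where
  "tstab G y = {g \<in> tcarrier G. tact G g y = y}"

definition tGamma1 :: "('a, 'b) monoid_scheme \<Rightarrow> (nat \<Rightarrow> 'a) \<Rightarrow> ('a \<times> 'a) set" where
  "tGamma1 G xs = (\<Inter>n. tstab G (xs n))"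

definition Gamma1_of :: "('a \<times> 'a) set \<Rightarrow> 'a set" where
  "Gamma1_of T = fst ` T"

definition centralizer :: "('a, 'b) monoid_scheme \<Rightarrow> 'a set \<Rightarrow> 'a set" where
  "centralizer G H = {g \<in> carrier G. \<forall>h\<in>H. g \<otimes>\<^bsub>G\<^esub> h = h \<otimes>\<^bsub>G\<^esub> g}"

definition Mcal :: "('a, 'b) monoid_scheme \<Rightarrow> ('a \<times> 'a) set \<Rightarrow> 'a set" where
  "Mcal G T = centralizer G (Gamma1_of T)"

definition Mtilde :: "('a, 'b) monoid_scheme \<Rightarrow> ('a \<times> 'a) set \<Rightarrow> 'a \<Rightarrow> ('a \<times> 'a) set" where
  "Mtilde G T x = Mcal G T \<times> ((inv\<^bsub>G\<^esub> x) <#\<^bsub>G\<^esub> Mcal G T #>\<^bsub>G\<^esub> x)"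

end

theory Submission
  imports Defs
begin

text \<open>A pair \<open>(g, g')\<close> fixes \<open>y\<close> exactly when \<open>g' = y\<inverse> g\<inverse> y\<close>. So a pair fixing a point
  \<open>x\<close> of the family is determined by its first component \<open>g\<close>, and \<open>(g, x\<inverse> g\<inverse> x)\<close> fixes a
  further point \<open>y\<close> iff \<open>g\<close> commutes with \<open>y x\<inverse>\<close>. Hence \<open>\<Gamma>\<^sub>1\<close> is the centralizer of the
  elements \<open>x\<^sub>n x\<inverse>\<close>, and the common fixed points are the \<open>y\<close> with \<open>y x\<inverse> \<in> \<Gamma>\<^sub>1'\<close>, i.e. the
  coset \<open>\<Gamma>\<^sub>1' x\<close>. Every pair in \<open>Mtilde\<close> maps this coset into itself, and two cosets
  \<open>H\<^sub>\<alpha> p\<close>, \<open>H\<^sub>\<beta> p\<close> through a common point meet in \<open>(H\<^sub>\<alpha> \<inter> H\<^sub>\<beta>) p\<close>, which gives (3).\<close>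

definition twisted_pairs :: "('a, 'b) monoid_scheme \<Rightarrow> 'a set \<Rightarrow> 'a \<Rightarrow> ('a \<times> 'a) set" where
  "twisted_pairs G H x = H \<times> ((inv\<^bsub>G\<^esub> x) <#\<^bsub>G\<^esub> H #>\<^bsub>G\<^esub> x)"

lemma Mtilde_eq_twisted_pairs: "Mtilde G T x = twisted_pairs G (Mcal G T) x"
  by (simp add: Mtilde_def twisted_pairs_def)

context group
begin

lemma subgroup_centralizer:
  assumes "H \<subseteq> carrier G"
  shows "subgroup (centralizer G H) G"
proof
  show "centralizer G H \<subseteq> carrier G" "\<one> \<in> centralizer G H"
    using assms by (auto simp: centralizer_def)
next
  fix a b assume a: "a \<in> centralizer G H" and b: "b \<in> centralizer G H"
  then have [simp]: "a \<in> carrier G" "b \<in> carrier G" by (auto simp: centralizer_def)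
  have "a \<otimes> b \<otimes> h = h \<otimes> (a \<otimes> b)" if "h \<in> H" for h
  proof -
    have [simp]: "h \<in> carrier G" using that assms by auto
    have "a \<otimes> b \<otimes> h = a \<otimes> (h \<otimes> b)" using b that by (simp add: centralizer_def m_assoc)
    also have "\<dots> = h \<otimes> (a \<otimes> b)" using a that by (simp add: centralizer_def m_assoc[symmetric])
    finally show ?thesis .
  qed
  then show "a \<otimes> b \<in> centralizer G H" by (simp add: centralizer_def)
  have "inv a \<otimes> h = h \<otimes> inv a" if "h \<in> H" for h
  proof -
    have [simp]: "h \<in> carrier G" using that assms by auto
    have "h \<otimes> a = a \<otimes> h" using a that by (simp add: centralizer_def)
    have "inv a \<otimes> h = inv a \<otimes> (h \<otimes> a) \<otimes> inv a" by (simp add: m_assoc)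
    also have "\<dots> = h \<otimes> inv a" using \<open>h \<otimes> a = a \<otimes> h\<close> by (simp add: m_assoc[symmetric])
    finally show ?thesis .
  qed
  then show "inv a \<in> centralizer G H" by (simp add: centralizer_def)
qed

lemma mult_inv_cancel_left [simp]:
  "x \<in> carrier G \<Longrightarrow> z \<in> carrier G \<Longrightarrow> x \<otimes> (inv x \<otimes> z) = z"
  by (simp add: m_assoc[symmetric])

lemma tact_conj_right:
  assumes "g \<in> carrier G" "g' \<in> carrier G" "m \<in> carrier G" "x \<in> carrier G"
  shows "tact G (g, inv x \<otimes> g' \<otimes> x) (m \<otimes> x) = g \<otimes> m \<otimes> g' \<otimes> x"
  using assms by (simp add: tact_def m_assoc)

lemma tact_fixed_iff:
  assumes "g \<in> carrier G" "g' \<in> carrier G" "y \<in> carrier G"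
  shows "tact G (g, g') y = y \<longleftrightarrow> g' = inv y \<otimes> inv g \<otimes> y"
proof -
  have "g' = inv y \<otimes> inv g \<otimes> y \<longleftrightarrow> g' = inv (g \<otimes> y) \<otimes> y"
    using assms by (simp add: inv_mult_group)
  also have "\<dots> \<longleftrightarrow> y = g \<otimes> y \<otimes> g'"
    using assms by (intro inv_solve_left) auto
  finally show ?thesis by (auto simp: tact_def)
qed

lemma tstab_eq:
  assumes "y \<in> carrier G"
  shows "tstab G y = {(g, inv y \<otimes> inv g \<otimes> y) | g. g \<in> carrier G}"
  using assms by (auto simp: tstab_def tcarrier_def tact_fixed_iff)

text \<open>The pair \<open>(g, x\<inverse> g\<inverse> x)\<close> fixing \<open>x\<close> acts on \<open>y = c x\<close> by conjugating \<open>c\<close> by \<open>g\<close>.\<close>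

lemma tact_twisted_fixed_iff:
  assumes "g \<in> carrier G" "x \<in> carrier G" "y \<in> carrier G"
  shows "tact G (g, inv x \<otimes> inv g \<otimes> x) y = y \<longleftrightarrow> g \<otimes> (y \<otimes> inv x) = y \<otimes> inv x \<otimes> g"
proof -
  define c where "c = y \<otimes> inv x"
  have c: "c \<in> carrier G" and y: "y = c \<otimes> x"
    using assms by (simp_all add: c_def m_assoc)
  have "tact G (g, inv x \<otimes> inv g \<otimes> x) y = y \<longleftrightarrow> g \<otimes> c \<otimes> inv g \<otimes> x = c \<otimes> x"
    unfolding y using assms c tact_conj_right by simp
  also have "\<dots> \<longleftrightarrow> g \<otimes> c \<otimes> inv g = c"
    using assms c by (simp add: right_cancel)
  also have "\<dots> \<longleftrightarrow> g \<otimes> c = c \<otimes> g"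
    using assms c by (metis inv_closed inv_solve_right m_closed)
  finally show ?thesis unfolding c_def .
qed

lemma fixed_points_twisted:
  assumes "H \<subseteq> carrier G" "x \<in> carrier G"
  shows "{y \<in> carrier G. \<forall>g\<in>H. tact G (g, inv x \<otimes> inv g \<otimes> x) y = y} = centralizer G H #> x"
proof -
  have "y \<in> centralizer G H #> x \<longleftrightarrow> y \<in> carrier G \<and> y \<otimes> inv x \<in> centralizer G H" for y
    using subgroup.rcos_module[OF subgroup_centralizer[OF assms(1)] is_group assms(2)]
      r_coset_subset_G[OF subgroup.subset[OF subgroup_centralizer[OF assms(1)]] assms(2)]
    by blast
  moreover have "tact G (g, inv x \<otimes> inv g \<otimes> x) y = y \<longleftrightarrow> y \<otimes> inv x \<otimes> g = g \<otimes> (y \<otimes> inv x)"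
    if "g \<in> H" "y \<in> carrier G" for g y
    using tact_twisted_fixed_iff[of g x y] that assms by auto
  ultimately show ?thesis
    using assms by (auto simp: centralizer_def)
qed

lemma tGamma1_eq_twisted:
  assumes "range xs \<subseteq> carrier G"
  shows "tGamma1 G xs = {(g, inv (xs n) \<otimes> inv g \<otimes> xs n) | g.
           g \<in> carrier G \<and> (\<forall>m. tact G (g, inv (xs n) \<otimes> inv g \<otimes> xs n) (xs m) = xs m)}"
proof -
  have "tGamma1 G xs = tstab G (xs n) \<inter> {p \<in> tcarrier G. \<forall>m. tact G p (xs m) = xs m}"
    by (auto simp: tGamma1_def tstab_def)
  moreover have "xs n \<in> carrier G"
    using assms by auto
  ultimately show ?thesis
    by (auto simp: tstab_eq tcarrier_def)
qed

lemma Gamma1_of_tGamma1_eq: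
  assumes "range xs \<subseteq> carrier G"
  shows "Gamma1_of (tGamma1 G xs)
    = {g \<in> carrier G. \<forall>m. tact G (g, inv (xs n) \<otimes> inv g \<otimes> xs n) (xs m) = xs m}"
  unfolding Gamma1_of_def tGamma1_eq_twisted[OF assms, of n] by force

lemma Gamma1_of_tGamma1_eq_centralizer:
  assumes "range xs \<subseteq> carrier G"
  shows "Gamma1_of (tGamma1 G xs) = centralizer G (range (\<lambda>m. xs m \<otimes> inv (xs n)))"
proof -
  have "xs m \<in> carrier G" for m
    using assms by auto
  then show ?thesis
    unfolding Gamma1_of_tGamma1_eq[OF assms, of n]
    by (auto simp: centralizer_def tact_twisted_fixed_iff)
qed

lemma subgroup_Gamma1_of_tGamma1:
  assumes "range xs \<subseteq> carrier G"
  shows "subgroup (Gamma1_of (tGamma1 G xs)) G"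
  unfolding Gamma1_of_tGamma1_eq_centralizer[OF assms, of 0]
  using assms by (intro subgroup_centralizer) (auto simp: image_subset_iff)

lemma subgroup_Mcal_tGamma1:
  assumes "range xs \<subseteq> carrier G"
  shows "subgroup (Mcal G (tGamma1 G xs)) G"
  unfolding Mcal_def
  using subgroup.subset[OF subgroup_Gamma1_of_tGamma1[OF assms]] by (rule subgroup_centralizer)

lemma tGamma1_eq:
  assumes "range xs \<subseteq> carrier G"
  shows "tGamma1 G xs = {(g, inv (xs n) \<otimes> inv g \<otimes> xs n) | g. g \<in> Gamma1_of (tGamma1 G xs)}"
  using tGamma1_eq_twisted[OF assms, of n] Gamma1_of_tGamma1_eq[OF assms, of n] by simp

lemma fixed_points_tGamma1:
  assumes "range xs \<subseteq> carrier G"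
  shows "Mcal G (tGamma1 G xs) #> xs n = {y \<in> carrier G. \<forall>g\<in>tGamma1 G xs. tact G g y = y}"
proof -
  have "Gamma1_of (tGamma1 G xs) \<subseteq> carrier G"
    using subgroup.subset[OF subgroup_Gamma1_of_tGamma1[OF assms]] .
  moreover have "{y \<in> carrier G. \<forall>g\<in>tGamma1 G xs. tact G g y = y}
      = {y \<in> carrier G. \<forall>g\<in>Gamma1_of (tGamma1 G xs).
           tact G (g, inv (xs n) \<otimes> inv g \<otimes> xs n) y = y}"
    by (subst (1) tGamma1_eq[OF assms, of n]) blast
  moreover have "xs n \<in> carrier G"
    using assms by auto
  ultimately show ?thesis
    by (simp add: Mcal_def fixed_points_twisted)
qed

lemma lcos_conj_rcos_eq:
  assumes "H \<subseteq> carrier G" "x \<in> carrier G"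
  shows "x <# ((inv x <# H) #> x) = H #> x"
  using assms by (simp add: coset_assoc l_coset_subset_G lcos_m_assoc lcos_mult_one)

lemma twisted_pairs_act_rcos:
  assumes H: "subgroup H G" and x: "x \<in> carrier G"
    and p: "p \<in> H #> x" and q: "q \<in> twisted_pairs G H x"
  shows "tact G q p \<in> H #> x"
proof -
  note Hc = subgroup.mem_carrier[OF H]
  obtain h where h: "h \<in> H" and p_eq: "p = h \<otimes> x"
    using p by (auto simp: r_coset_def)
  obtain g k where g: "g \<in> H" and k: "k \<in> H" and q_eq: "q = (g, inv x \<otimes> k \<otimes> x)"
    using q by (auto simp: twisted_pairs_def l_coset_def r_coset_def)
  have "tact G q p = g \<otimes> h \<otimes> k \<otimes> x"
    unfolding p_eq q_eq using g h k x Hc by (simp add: tact_conj_right)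
  moreover have "g \<otimes> h \<otimes> k \<in> H"
    using g h k H by (simp add: subgroup.m_closed)
  ultimately show ?thesis
    using x Hc by (simp add: rcosI subgroup.subset[OF H])
qed

lemma left_pair_in_twisted_pairs:
  assumes H: "subgroup H G" and x: "x \<in> carrier G" and h: "h \<in> H"
  shows "(h, \<one>) \<in> twisted_pairs G H x"
proof -
  have "inv x \<otimes> \<one> \<otimes> x \<in> (inv x <# H) #> x"
    using subgroup.one_closed[OF H] by (auto simp: l_coset_def r_coset_def)
  then show ?thesis
    using h x by (simp add: twisted_pairs_def)
qed

lemma tact_left_pair:
  "h \<in> carrier G \<Longrightarrow> p \<in> carrier G \<Longrightarrow> tact G (h, \<one>) p = h \<otimes> p"
  by (simp add: tact_def)

lemma orbit_twisted_pairs: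
  assumes H: "subgroup H G" and x: "x \<in> carrier G"
  shows "tset_act G (twisted_pairs G H x) x = H #> x"
proof
  show "tset_act G (twisted_pairs G H x) x \<subseteq> H #> x"
    using twisted_pairs_act_rcos[OF H x rcos_self[OF x H]] by (auto simp: tset_act_def)
  show "H #> x \<subseteq> tset_act G (twisted_pairs G H x) x"
  proof
    fix y assume "y \<in> H #> x"
    then obtain h where h: "h \<in> H" and y: "y = h \<otimes> x"
      by (auto simp: r_coset_def)
    then have "y = tact G (h, \<one>) x"
      using x subgroup.mem_carrier[OF H] by (simp add: tact_left_pair)
    then show "y \<in> tset_act G (twisted_pairs G H x) x"
      unfolding tset_act_def using left_pair_in_twisted_pairs[OF H x h] by blast
  qed
qed

lemma rcos_Int:
  assumes "subgroup H1 G" "subgroup H2 G" "p \<in> carrier G"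
  shows "(H1 #> p) \<inter> (H2 #> p) = (H1 \<inter> H2) #> p"
  using assms by (auto simp: r_coset_def right_cancel subgroup.mem_carrier)

lemma tset_act_twisted_pairs_Int:
  assumes H1: "subgroup H1 G" and H2: "subgroup H2 G"
    and xa: "xa \<in> carrier G" and xb: "xb \<in> carrier G"
    and pa: "p \<in> H1 #> xa" and pb: "p \<in> H2 #> xb"
  shows "tset_act G (twisted_pairs G H1 xa \<inter> twisted_pairs G H2 xb) p = (H1 \<inter> H2) #> p"
proof
  have p: "p \<in> carrier G"
    using pa xa r_coset_subset_G[OF subgroup.subset[OF H1]] by blast
  show "tset_act G (twisted_pairs G H1 xa \<inter> twisted_pairs G H2 xb) p \<subseteq> (H1 \<inter> H2) #> p"
    using twisted_pairs_act_rcos[OF H1 xa pa] twisted_pairs_act_rcos[OF H2 xb pb]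
    unfolding repr_independence[OF pa xa H1] repr_independence[OF pb xb H2]
      rcos_Int[OF H1 H2 p, symmetric]
    by (auto simp: tset_act_def)
  show "(H1 \<inter> H2) #> p \<subseteq> tset_act G (twisted_pairs G H1 xa \<inter> twisted_pairs G H2 xb) p"
  proof
    fix y assume "y \<in> (H1 \<inter> H2) #> p"
    then obtain h where h: "h \<in> H1" "h \<in> H2" and y: "y = h \<otimes> p"
      by (auto simp: r_coset_def)
    then have "y = tact G (h, \<one>) p"
      using p subgroup.mem_carrier[OF H1] by (simp add: tact_left_pair)
    then show "y \<in> tset_act G (twisted_pairs G H1 xa \<inter> twisted_pairs G H2 xb) p"
      unfolding tset_act_def
      using left_pair_in_twisted_pairs[OF H1 xa h(1)] left_pair_in_twisted_pairs[OF H2 xb h(2)]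
      by blast
  qed
qed

lemma orbit_Int_twisted_pairs:
  assumes H1: "subgroup H1 G" and H2: "subgroup H2 G"
    and xa: "xa \<in> carrier G" and xb: "xb \<in> carrier G"
    and qa: "qa \<in> twisted_pairs G H1 xa" and qb: "qb \<in> twisted_pairs G H2 xb"
    and eq: "tact G qa xa = tact G qb xb"
  shows "tset_act G (twisted_pairs G H1 xa) xa \<inter> tset_act G (twisted_pairs G H2 xb) xb
    = tset_act G (twisted_pairs G H1 xa \<inter> twisted_pairs G H2 xb) (tact G qa xa)"
proof -
  let ?p = "tact G qa xa"
  have pa: "?p \<in> H1 #> xa"
    using twisted_pairs_act_rcos[OF H1 xa rcos_self[OF xa H1] qa] .
  have pb: "?p \<in> H2 #> xb"
    using twisted_pairs_act_rcos[OF H2 xb rcos_self[OF xb H2] qb] eq by simp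
  have p: "?p \<in> carrier G"
    using pa xa r_coset_subset_G[OF subgroup.subset[OF H1]] by blast
  show ?thesis
    unfolding orbit_twisted_pairs[OF H1 xa] orbit_twisted_pairs[OF H2 xb]
      tset_act_twisted_pairs_Int[OF H1 H2 xa xb pa pb]
      repr_independence[OF pa xa H1] repr_independence[OF pb xb H2] rcos_Int[OF H1 H2 p] ..
qed

end

theorem proposition5:
  fixes G :: "('a, 'b) monoid_scheme" and xs :: "nat \<Rightarrow> 'a" and n0 :: nat
  assumes grp: "group G"
    and fam: "inj xs" "range xs \<subseteq> carrier G"
    and nontriv: "tGamma1 G xs \<noteq> {tone G}"
  defines "x \<equiv> xs n0"
  shows
    \<comment> \<open>(1)\<close>
    "subgroup (Gamma1_of (tGamma1 G xs)) G
     \<and> (\<forall>n. tGamma1 G xs = {(g, inv\<^bsub>G\<^esub> (xs n) \<otimes>\<^bsub>G\<^esub> inv\<^bsub>G\<^esub> g \<otimes>\<^bsub>G\<^esub> xs n) | g. g \<in> Gamma1_of (tGamma1 G xs)})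
     \<comment> \<open>(2)\<close>
     \<and> tset_act G (Mtilde G (tGamma1 G xs) x) x
         = x <#\<^bsub>G\<^esub> ((inv\<^bsub>G\<^esub> x) <#\<^bsub>G\<^esub> Mcal G (tGamma1 G xs) #>\<^bsub>G\<^esub> x)
     \<and> x <#\<^bsub>G\<^esub> ((inv\<^bsub>G\<^esub> x) <#\<^bsub>G\<^esub> Mcal G (tGamma1 G xs) #>\<^bsub>G\<^esub> x)
         = Mcal G (tGamma1 G xs) #>\<^bsub>G\<^esub> x
     \<and> Mcal G (tGamma1 G xs) #>\<^bsub>G\<^esub> x
         = {y \<in> carrier G. \<forall>g\<in>tGamma1 G xs. tact G g y = y}
     \<and> (\<forall>g1\<in>Mcal G (tGamma1 G xs). \<forall>g2\<in>Mcal G (tGamma1 G xs). \<forall>m\<in>Mcal G (tGamma1 G xs).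
          tact G (g1, inv\<^bsub>G\<^esub> x \<otimes>\<^bsub>G\<^esub> g2 \<otimes>\<^bsub>G\<^esub> x) (m \<otimes>\<^bsub>G\<^esub> x)
            = g1 \<otimes>\<^bsub>G\<^esub> m \<otimes>\<^bsub>G\<^esub> g2 \<otimes>\<^bsub>G\<^esub> x)
     \<comment> \<open>(3)\<close>
     \<and> (\<forall>xa xb :: nat \<Rightarrow> 'a. \<forall>na nb ma mb.
          inj xa \<longrightarrow> range xa \<subseteq> carrier G \<longrightarrow> tGamma1 G xa \<noteq> {tone G} \<longrightarrow>
          inj xb \<longrightarrow> range xb \<subseteq> carrier G \<longrightarrow> tGamma1 G xb \<noteq> {tone G} \<longrightarrow>
          ma \<in> Mtilde G (tGamma1 G xa) (xa na) \<longrightarrow>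
          mb \<in> Mtilde G (tGamma1 G xb) (xb nb) \<longrightarrow>
          tact G ma (xa na) = tact G mb (xb nb) \<longrightarrow>
          (tset_act G (Mtilde G (tGamma1 G xa) (xa na)) (xa na)
             \<inter> tset_act G (Mtilde G (tGamma1 G xb) (xb nb)) (xb nb)
           = tset_act G (Mtilde G (tGamma1 G xa) (xa na) \<inter> Mtilde G (tGamma1 G xb) (xb nb))
               (tact G ma (xa na))
          \<and> tset_act G (Mtilde G (tGamma1 G xa) (xa na)) (xa na)
             \<inter> tset_act G (Mtilde G (tGamma1 G xb) (xb nb)) (xb nb)
           = tset_act G (Mtilde G (tGamma1 G xa) (xa na) \<inter> Mtilde G (tGamma1 G xb) (xb nb))
               (tact G mb (xb nb))))"
proof -
  interpret group G by (rule grp)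
  let ?T = "tGamma1 G xs" and ?M = "Mcal G (tGamma1 G xs)"
  have x: "x \<in> carrier G" using fam(2) by (auto simp: x_def)
  have M: "subgroup ?M G" by (rule subgroup_Mcal_tGamma1[OF fam(2)])
  have orbit: "tset_act G (Mtilde G ?T x) x = x <#\<^bsub>G\<^esub> ((inv\<^bsub>G\<^esub> x) <#\<^bsub>G\<^esub> ?M #>\<^bsub>G\<^esub> x)"
    unfolding Mtilde_eq_twisted_pairs orbit_twisted_pairs[OF M x]
      lcos_conj_rcos_eq[OF subgroup.subset[OF M] x] ..
  have fixed: "?M #>\<^bsub>G\<^esub> x = {y \<in> carrier G. \<forall>g\<in>?T. tact G g y = y}"
    unfolding x_def by (rule fixed_points_tGamma1[OF fam(2)])
  have explicit: "\<forall>g1\<in>?M. \<forall>g2\<in>?M. \<forall>m\<in>?M.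
      tact G (g1, inv\<^bsub>G\<^esub> x \<otimes>\<^bsub>G\<^esub> g2 \<otimes>\<^bsub>G\<^esub> x) (m \<otimes>\<^bsub>G\<^esub> x) = g1 \<otimes>\<^bsub>G\<^esub> m \<otimes>\<^bsub>G\<^esub> g2 \<otimes>\<^bsub>G\<^esub> x"
    using x subgroup.mem_carrier[OF M] by (simp add: tact_conj_right)
  have intersection: "tset_act G (Mtilde G (tGamma1 G xa) (xa na)) (xa na)
        \<inter> tset_act G (Mtilde G (tGamma1 G xb) (xb nb)) (xb nb)
      = tset_act G (Mtilde G (tGamma1 G xa) (xa na) \<inter> Mtilde G (tGamma1 G xb) (xb nb)) (tact G ma (xa na))"
    if "range xa \<subseteq> carrier G" "range xb \<subseteq> carrier G"
      "ma \<in> Mtilde G (tGamma1 G xa) (xa na)" "mb \<in> Mtilde G (tGamma1 G xb) (xb nb)"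
      "tact G ma (xa na) = tact G mb (xb nb)"
    for xa xb :: "nat \<Rightarrow> 'a" and na nb ma mb
    using that unfolding Mtilde_eq_twisted_pairs
    by (intro orbit_Int_twisted_pairs subgroup_Mcal_tGamma1) auto
  show ?thesis
    using subgroup_Gamma1_of_tGamma1[OF fam(2)] tGamma1_eq[OF fam(2)] orbit
      lcos_conj_rcos_eq[OF subgroup.subset[OF M] x] fixed explicit intersection
    by (intro conjI allI impI) auto
qed

end
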